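(* Let $\lambda>0$, let $E_1,E_2,\ldots$ be i.i.d. $\text{Exp}(\lambda)$ random variables, and let $$X=\prod_{i=1}^{\infty}\min\left\{\sum_{k=1}^iE_k,1\right\}.$$ Then for every $\beta>-1$, $\mathbb{E}[X^{\beta}]=e^{-\frac{\beta\lambda}{1+\beta}}$. In particular, $\mathbb{E}[X]=e^{-\lambda/2}$ and $\mathrm{Var}(X)=e^{-2\lambda/3}-e^{-\lambda}$.
   Context: $\text{Exp}(\lambda)$ denotes the exponential distribution with rate $\lambda$ (mean $1/\lambda$). *)

theory Defs
  imports "HOL-Probability.Probability"
begin

text \<open>The partial products are non-increasing and in [0,1], so the limit always exists.\<close>
definition prod_min_partial_sums :: "(nat \<Rightarrow> 'a \<Rightarrow> real) \<Rightarrow> 'a \<Rightarrow> real" where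
  "prod_min_partial_sums E \<omega> = lim (\<lambda>n. \<Prod>i<n. min (\<Sum>k\<le>i. E k \<omega>) 1)"

end

theory Submission
  imports Defs
begin

text \<open>The partial sums S i = E 0 + ... + E i are the arrival times of a Poisson process of rate l,
  and X is the product of those arrival times that lie in [0, 1]; the factors min (S i) 1 of the
  later ones are 1. For a nonnegative g with antiderivative G, integrating out the first
  interarrival time and inducting on n shows that the expectation of the product of g over the
  arrivals in [0, 1], restricted to the event of exactly n such arrivals, is
  exp (- l) * (l * (G 1 - G 0)) ^ n / n!. Summing over n gives exp (l * (G 1 - G 0) - l), and
  g u = u powr beta with G u = u powr (1 + beta) / (1 + beta) yields the moment formula; mean and
  variance are the cases beta = 1, 2.\<close>

text \<open>The product of g over the arrival times s + e 0 + ... + e i in [s, 1] of the process started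
  at time s, on the event that exactly n of them lie in [s, 1].\<close>

definition arrival_weight :: "(real \<Rightarrow> real) \<Rightarrow> nat \<Rightarrow> real \<Rightarrow> (nat \<Rightarrow> real) \<Rightarrow> ennreal" where
  "arrival_weight g n s e =
     (\<Prod>i<n. if s + (\<Sum>j\<le>i. e j) \<le> 1 then ennreal (g (s + (\<Sum>j\<le>i. e j))) else 0)
     * (if 1 < s + (\<Sum>j\<le>n. e j) then 1 else 0)"

lemma arrival_weight_cong:
  "(\<And>j. j \<le> n \<Longrightarrow> e j = e' j) \<Longrightarrow> arrival_weight g n s e = arrival_weight g n s e'"
  unfolding arrival_weight_def
  by (intro arg_cong2[where f="(*)"] prod.cong sum.cong refl) auto

lemma arrival_weight_Suc:
  "arrival_weight g (Suc n) s e =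
     (if s + e 0 \<le> 1 then ennreal (g (s + e 0)) else 0) * arrival_weight g n (s + e 0) (\<lambda>j. e (Suc j))"
  unfolding arrival_weight_def prod.lessThan_Suc_shift sum.atMost_Suc_shift
  by (simp only: add.assoc mult.assoc) simp

lemma borel_measurable_arrival_weight:
  assumes [measurable]: "g \<in> borel_measurable borel"
    and e: "\<And>j. j \<le> n \<Longrightarrow> (\<lambda>x. e x j) \<in> borel_measurable N"
  shows "(\<lambda>x. arrival_weight g n s (e x)) \<in> borel_measurable N"
proof -
  define e' where "e' x j = (if j \<le> n then e x j else 0)" for x j
  have [measurable]: "(\<lambda>x. e' x j) \<in> borel_measurable N" for j
    unfolding e'_def using e by (cases "j \<le> n") auto
  have "(\<lambda>x. arrival_weight g n s (e' x)) \<in> borel_measurable N"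
    unfolding arrival_weight_def by measurable
  moreover have "arrival_weight g n s (e' x) = arrival_weight g n s (e x)" for x
    by (rule arrival_weight_cong) (simp add: e'_def)
  ultimately show ?thesis by simp
qed

lemma partial_sum_le_1_iff_less_Least:
  fixes e :: "nat \<Rightarrow> real"
  assumes nonneg: "\<And>j. 0 \<le> e j" and exceeds: "\<exists>n. 1 < (\<Sum>j\<le>n. e j)"
  shows "(\<Sum>j\<le>i. e j) \<le> 1 \<longleftrightarrow> i < (LEAST n. 1 < (\<Sum>j\<le>n. e j))"
proof
  assume "(\<Sum>j\<le>i. e j) \<le> 1"
  then show "i < (LEAST n. 1 < (\<Sum>j\<le>n. e j))"
    using LeastI_ex[OF exceeds] sum_mono2[of "{..i}" "{..LEAST n. 1 < (\<Sum>j\<le>n. e j)}" e] nonneg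
    by (metis atMost_subset_iff finite_atMost leD le_less_trans not_le)
qed (use not_less_Least in fastforce)

lemma suminf_arrival_weight:
  fixes e :: "nat \<Rightarrow> real"
  assumes nonneg: "\<And>j. 0 \<le> e j" and exceeds: "\<exists>n. 1 < (\<Sum>j\<le>n. e j)"
  shows "(\<Sum>n. arrival_weight g n 0 e) = (\<Prod>i<(LEAST n. 1 < (\<Sum>j\<le>n. e j)). ennreal (g (\<Sum>j\<le>i. e j)))"
proof -
  define N where "N = (LEAST n. 1 < (\<Sum>j\<le>n. e j))"
  have le_iff: "(\<Sum>j\<le>i. e j) \<le> 1 \<longleftrightarrow> i < N" for i
    unfolding N_def by (rule partial_sum_le_1_iff_less_Least[OF nonneg exceeds])
  have "arrival_weight g n 0 e = 0" if "n \<noteq> N" for n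
  proof (cases "n < N")
    case True
    then show ?thesis
      using le_iff[of n] by (simp add: arrival_weight_def)
  next
    case False
    with that have "N \<in> {..<n}" by simp
    then show ?thesis
      using le_iff[of N] by (auto simp: arrival_weight_def intro!: prod_zero)
  qed
  then have "(\<Sum>n. arrival_weight g n 0 e) = arrival_weight g N 0 e"
    by (subst suminf_finite[of "{N}"]) auto
  also have "\<dots> = (\<Prod>i<N. ennreal (g (\<Sum>j\<le>i. e j)))"
    using le_iff le_iff[of N] by (simp add: arrival_weight_def not_le[symmetric])
  finally show ?thesis unfolding N_def .
qed

lemma suminf_arrival_weight_bounded:
  fixes e :: "nat \<Rightarrow> real"
  assumes "\<forall>n. (\<Sum>j\<le>n. e j) \<le> 1"
  shows "(\<Sum>n. arrival_weight g n 0 e) = 0"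
proof -
  have "arrival_weight g n 0 e = 0" for n
    using assms[rule_format, of n] by (simp add: arrival_weight_def)
  then show ?thesis by simp
qed

lemma prod_min_partial_sums_eq_prod:
  assumes nonneg: "\<And>j. 0 \<le> E j \<omega>" and exceeds: "\<exists>n. 1 < (\<Sum>j\<le>n. E j \<omega>)"
  shows "prod_min_partial_sums E \<omega> = (\<Prod>i<(LEAST n. 1 < (\<Sum>j\<le>n. E j \<omega>)). \<Sum>j\<le>i. E j \<omega>)"
proof -
  define N where "N = (LEAST n. 1 < (\<Sum>j\<le>n. E j \<omega>))"
  have le_iff: "(\<Sum>j\<le>i. E j \<omega>) \<le> 1 \<longleftrightarrow> i < N" for i
    unfolding N_def by (rule partial_sum_le_1_iff_less_Least[OF nonneg exceeds])
  have min_eq: "min (\<Sum>j\<le>i. E j \<omega>) 1 = (if i < N then \<Sum>j\<le>i. E j \<omega> else 1)" for i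
    using le_iff[of i] by auto
  have "(\<Prod>i<k. min (\<Sum>j\<le>i. E j \<omega>) 1) = (\<Prod>i<N. \<Sum>j\<le>i. E j \<omega>)" if "N \<le> k" for k
  proof -
    have "{..<k} = {..<N} \<union> {N..<k}" "{..<N} \<inter> {N..<k} = {}"
      using that by auto
    then have "(\<Prod>i<k. min (\<Sum>j\<le>i. E j \<omega>) 1)
        = (\<Prod>i<N. min (\<Sum>j\<le>i. E j \<omega>) 1) * (\<Prod>i\<in>{N..<k}. min (\<Sum>j\<le>i. E j \<omega>) 1)"
      by (simp add: prod.union_disjoint)
    also have "\<dots> = (\<Prod>i<N. \<Sum>j\<le>i. E j \<omega>)"
      by (simp add: min_eq)
    finally show ?thesis .
  qed
  then have "(\<lambda>k. \<Prod>i<k. min (\<Sum>j\<le>i. E j \<omega>) 1) \<longlonglongrightarrow> (\<Prod>i<N. \<Sum>j\<le>i. E j \<omega>)"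
    by (intro tendsto_eventually) (auto simp: eventually_sequentially)
  then show ?thesis
    unfolding prod_min_partial_sums_def N_def by (rule limI)
qed

lemma suminf_arrival_weight_powr:
  assumes nonneg: "\<And>j. 0 \<le> E j \<omega>" and exceeds: "\<exists>n. 1 < (\<Sum>j\<le>n. E j \<omega>)"
  shows "(\<Sum>n. arrival_weight (\<lambda>u. u powr \<beta>) n 0 (\<lambda>j. E j \<omega>))
    = ennreal (prod_min_partial_sums E \<omega> powr \<beta>)"
  by (simp add: suminf_arrival_weight[OF assms] prod_min_partial_sums_eq_prod[of E \<omega>, OF assms]
      prod_powr_distrib prod_ennreal)

lemma prod_min_partial_sums_nonneg:
  assumes "\<And>j. 0 \<le> E j \<omega>" "\<exists>n. 1 < (\<Sum>j\<le>n. E j \<omega>)"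
  shows "0 \<le> prod_min_partial_sums E \<omega>"
  by (simp add: prod_min_partial_sums_eq_prod[of E \<omega>, OF assms] prod_nonneg sum_nonneg assms)

lemma suminf_ennreal_exp_series:
  fixes c x :: real
  assumes "0 \<le> c" "0 \<le> x"
  shows "(\<Sum>n. ennreal (c * x ^ n / fact n)) = ennreal (c * exp x)"
proof -
  have "(\<lambda>n. c * (x ^ n /\<^sub>R fact n)) sums (c * exp x)"
    by (intro sums_mult exp_converges)
  then have "(\<lambda>n. c * x ^ n / fact n) sums (c * exp x)"
    by (simp add: divide_inverse mult_ac)
  with assms show ?thesis
    by (subst suminf_ennreal2) (auto simp: sums_iff)
qed

lemma emeasure_exponential_density_greaterThan:
  assumes "0 < l" "0 \<le> a"
  shows "emeasure (density lborel (exponential_density l)) {a<..} = exp (- a * l)"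
proof -
  interpret prob_space "density lborel (exponential_density l)"
    using assms(1) by (rule prob_space_exponential_density)
  have "{a<..} = space (density lborel (exponential_density l)) - {..a}"
    by auto
  then have "emeasure (density lborel (exponential_density l)) {a<..}
      = 1 - emeasure (density lborel (exponential_density l)) {..a}"
    by (simp add: emeasure_compl emeasure_space_1 del: space_density)
  also have "\<dots> = exp (- a * l)"
    using assms emeasure_erlang_density[of l 0 a]
    by (simp add: erlang_CDF_0 ennreal_minus mult.commute flip: ennreal_1)
  finally show ?thesis .
qed

lemma has_integral_power_of_antiderivative:
  fixes G g :: "real \<Rightarrow> real"
  assumes "a \<le> b" and cont: "continuous_on {a..b} G"
    and deriv: "\<And>u. a < u \<Longrightarrow> u < b \<Longrightarrow> (G has_real_derivative g u) (at u)"
  shows "((\<lambda>u. g u * (G b - G u) ^ n) has_integral (G b - G a) ^ Suc n / real (Suc n)) {a..b}"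
proof -
  define \<Phi> where "\<Phi> u = - ((G b - G u) ^ Suc n / real (Suc n))" for u
  have "((\<lambda>u. g u * (G b - G u) ^ n) has_integral \<Phi> b - \<Phi> a) {a..b}"
  proof (rule fundamental_theorem_of_calculus_interior[OF \<open>a \<le> b\<close>])
    show "continuous_on {a..b} \<Phi>"
      unfolding \<Phi>_def by (intro continuous_intros cont) auto
    fix u assume "u \<in> {a<..<b}"
    then have "(\<Phi> has_real_derivative - ((1 + real n) * (- g u * (G b - G u) ^ n) / real (Suc n))) (at u)"
      unfolding \<Phi>_def
      by (intro DERIV_minus DERIV_cdivide DERIV_power_Suc derivative_eq_intros deriv refl) (auto simp: deriv)
    also have "- ((1 + real n) * (- g u * (G b - G u) ^ n) / real (Suc n)) = g u * (G b - G u) ^ n"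
      by (simp add: field_simps)
    finally show "(\<Phi> has_vector_derivative g u * (G b - G u) ^ n) (at u)"
      by (simp add: has_real_derivative_iff_has_vector_derivative)
  qed
  then show ?thesis
    by (simp add: \<Phi>_def)
qed

lemma antiderivative_le_at_1:
  fixes G g :: "real \<Rightarrow> real"
  assumes "\<And>u. 0 \<le> g u" and "continuous_on {0..1} G"
    and "\<And>u. 0 < u \<Longrightarrow> u < 1 \<Longrightarrow> (G has_real_derivative g u) (at u)"
    and "0 \<le> s" "s \<le> 1"
  shows "G s \<le> G 1"
proof (rule DERIV_nonneg_imp_increasing_open[OF \<open>s \<le> 1\<close>])
  fix u assume "s < u" "u < 1"
  with assms show "\<exists>y. (G has_real_derivative y) (at u) \<and> 0 \<le> y"
    by (meson le_less_trans)
qed (use assms in \<open>auto intro: continuous_on_subset\<close>)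

text \<open>For g = 1 and G u = u, this is the Poisson probability of exactly n arrivals in [s, 1].\<close>

definition expected_arrival_weight :: "real \<Rightarrow> (real \<Rightarrow> real) \<Rightarrow> nat \<Rightarrow> real \<Rightarrow> real" where
  "expected_arrival_weight l G n s = exp (- l * (1 - s)) * (l * (G 1 - G s)) ^ n / fact n"

lemma exponential_density_mult_expected_arrival_weight:
  assumes "0 \<le> y"
  shows "exponential_density l y * expected_arrival_weight l G n (s + y)
    = l * exp (- l * (1 - s)) * l ^ n / fact n * (G 1 - G (s + y)) ^ n"
proof -
  have exp_eq: "exp (- y * l) * exp (- l * (1 - (s + y))) = exp (- l * (1 - s))"
    by (simp add: exp_add[symmetric] algebra_simps)
  have "exponential_density l y * expected_arrival_weight l G n (s + y)
      = l * (exp (- y * l) * exp (- l * (1 - (s + y)))) * (l * (G 1 - G (s + y))) ^ n / fact n"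
    using assms by (simp add: exponential_density_def expected_arrival_weight_def mult_ac)
  also have "\<dots> = l * exp (- l * (1 - s)) * l ^ n / fact n * (G 1 - G (s + y)) ^ n"
    unfolding exp_eq by (simp add: power_mult_distrib mult_ac)
  finally show ?thesis .
qed

lemma nn_integral_exponential_step:
  fixes G g :: "real \<Rightarrow> real"
  assumes l: "0 < l" and s: "0 \<le> s" "s \<le> 1"
    and g[measurable]: "g \<in> borel_measurable borel" and g_nonneg: "\<And>u. 0 \<le> g u"
    and G_cont: "continuous_on {0..1} G"
    and G_deriv: "\<And>u. 0 < u \<Longrightarrow> u < 1 \<Longrightarrow> (G has_real_derivative g u) (at u)"
  shows "(\<integral>\<^sup>+y. indicator {0..1 - s} y * ennreal (g (s + y) * expected_arrival_weight l G n (s + y))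
            \<partial>density lborel (exponential_density l))
       = ennreal (expected_arrival_weight l G (Suc n) s)"
proof -
  define C where "C = l * exp (- l * (1 - s)) * l ^ n / fact n"
  have G_shift_cont: "continuous_on {0..1 - s} (\<lambda>y. G (s + y))"
    by (rule continuous_on_compose2[OF G_cont]) (auto intro!: continuous_intros simp: s)
  have [measurable]:
    "(\<lambda>y. indicator {0..1 - s} y *\<^sub>R expected_arrival_weight l G n (s + y)) \<in> borel_measurable borel"
    unfolding expected_arrival_weight_def
    by (intro borel_measurable_continuous_on_indicator continuous_intros G_shift_cont) auto
  have G_shift_deriv: "((\<lambda>y. G (s + y)) has_real_derivative g (s + y) * 1) (at y)"
    if "0 < y" "y < 1 - s" for y
    by (rule DERIV_chain2[OF G_deriv]) (use that s in \<open>auto intro!: derivative_eq_intros\<close>)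
  have "((\<lambda>y. g (s + y) * (G (s + (1 - s)) - G (s + y)) ^ n)
          has_integral (G (s + (1 - s)) - G (s + 0)) ^ Suc n / real (Suc n)) {0..1 - s}"
    by (rule has_integral_power_of_antiderivative) (use s G_shift_cont G_shift_deriv in auto)
  then have integral: "((\<lambda>y. C * (g (s + y) * (G 1 - G (s + y)) ^ n))
      has_integral C * ((G 1 - G s) ^ Suc n / real (Suc n))) {0..1 - s}"
    by (intro has_integral_mult_right) simp
  have "(\<integral>\<^sup>+y. indicator {0..1 - s} y * ennreal (g (s + y) * expected_arrival_weight l G n (s + y))
            \<partial>density lborel (exponential_density l))
      = (\<integral>\<^sup>+y. ennreal (g (s + y) * (indicator {0..1 - s} y *\<^sub>R expected_arrival_weight l G n (s + y)))
            \<partial>density lborel (exponential_density l))"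
    by (intro nn_integral_cong) (simp add: indicator_def)
  also have "\<dots> = (\<integral>\<^sup>+y. ennreal (exponential_density l y)
           * ennreal (g (s + y) * (indicator {0..1 - s} y *\<^sub>R expected_arrival_weight l G n (s + y))) \<partial>lborel)"
    by (rule nn_integral_density) measurable
  also have "\<dots> = (\<integral>\<^sup>+y. ennreal (C * (g (s + y) * (G 1 - G (s + y)) ^ n)) * indicator {0..1 - s} y \<partial>lborel)"
  proof (intro nn_integral_cong)
    fix y :: real
    have density_eq: "exponential_density l y * (g (s + y) * expected_arrival_weight l G n (s + y))
        = C * (g (s + y) * (G 1 - G (s + y)) ^ n)" if "0 \<le> y"
      unfolding mult.left_commute[of "exponential_density l y"]
        exponential_density_mult_expected_arrival_weight[OF that]
      by (simp add: C_def mult_ac)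
    show "ennreal (exponential_density l y)
           * ennreal (g (s + y) * (indicator {0..1 - s} y *\<^sub>R expected_arrival_weight l G n (s + y)))
        = ennreal (C * (g (s + y) * (G 1 - G (s + y)) ^ n)) * indicator {0..1 - s} y"
    proof (cases "y \<in> {0..1 - s}")
      case True
      then show ?thesis
        using l by (simp add: exponential_density_nonneg ennreal_mult'[symmetric] density_eq)
    qed simp
  qed
  also have "\<dots> = ennreal (C * ((G 1 - G s) ^ Suc n / real (Suc n)))"
  proof (rule nn_integral_has_integral_lebesgue'[OF _ integral])
    fix y assume "y \<in> {0..1 - s}"
    then have "G (s + y) \<le> G 1"
      using s by (intro antiderivative_le_at_1[OF g_nonneg G_cont G_deriv]) auto
    then show "0 \<le> C * (g (s + y) * (G 1 - G (s + y)) ^ n)"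
      using l g_nonneg by (simp add: C_def)
  qed
  also have "C * ((G 1 - G s) ^ Suc n / real (Suc n)) = expected_arrival_weight l G (Suc n) s"
    unfolding C_def expected_arrival_weight_def power_mult_distrib by (simp add: field_simps)
  finally show ?thesis .
qed

lemma nn_integral_arrival_weight_Suc:
  assumes "sigma_finite_measure D" and sets_D: "sets D = sets borel"
    and [measurable]: "g \<in> borel_measurable borel"
  shows "(\<integral>\<^sup>+x. arrival_weight g (Suc n) s (\<lambda>j. x (m + j)) \<partial>PiM {m..m + Suc n} (\<lambda>_. D))
    = (\<integral>\<^sup>+y. (if s + y \<le> 1 then ennreal (g (s + y)) else 0)
          * (\<integral>\<^sup>+x. arrival_weight g n (s + y) (\<lambda>j. x (Suc m + j)) \<partial>PiM {Suc m..Suc m + n} (\<lambda>_. D)) \<partial>D)"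
proof -
  interpret product_sigma_finite "\<lambda>_::nat. D"
    using assms(1) by (simp add: product_sigma_finite_def)
  have coordinate: "(\<lambda>x. x i) \<in> borel_measurable (PiM I (\<lambda>_. D))" if "i \<in> I" for i I
    using measurable_component_singleton[OF that, of "\<lambda>_. D"] measurable_cong_sets[OF refl sets_D]
    by blast
  have "{m..m + Suc n} = insert m {Suc m..Suc m + n}"
    by auto
  then have "(\<integral>\<^sup>+x. arrival_weight g (Suc n) s (\<lambda>j. x (m + j)) \<partial>PiM {m..m + Suc n} (\<lambda>_. D))
      = (\<integral>\<^sup>+y. \<integral>\<^sup>+x. arrival_weight g (Suc n) s (\<lambda>j. (x(m := y)) (m + j))
           \<partial>PiM {Suc m..Suc m + n} (\<lambda>_. D) \<partial>D)"
    by (simp only:, intro product_nn_integral_insert_rev borel_measurable_arrival_weight coordinate) auto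
  also have "\<dots> = (\<integral>\<^sup>+y. (if s + y \<le> 1 then ennreal (g (s + y)) else 0)
          * (\<integral>\<^sup>+x. arrival_weight g n (s + y) (\<lambda>j. x (Suc m + j)) \<partial>PiM {Suc m..Suc m + n} (\<lambda>_. D)) \<partial>D)"
    by (intro nn_integral_cong, subst nn_integral_cmult[symmetric])
      (auto intro!: borel_measurable_arrival_weight coordinate simp: arrival_weight_Suc)
  finally show ?thesis .
qed

lemma nn_integral_arrival_weight_PiM:
  fixes G g :: "real \<Rightarrow> real"
  assumes l: "0 < l"
    and g[measurable]: "g \<in> borel_measurable borel" and g_nonneg: "\<And>u. 0 \<le> g u"
    and G_cont: "continuous_on {0..1} G"
    and G_deriv: "\<And>u. 0 < u \<Longrightarrow> u < 1 \<Longrightarrow> (G has_real_derivative g u) (at u)"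
    and s: "0 \<le> s" "s \<le> 1"
  shows "(\<integral>\<^sup>+x. arrival_weight g n s (\<lambda>j. x (m + j))
            \<partial>PiM {m..m + n} (\<lambda>_. density lborel (exponential_density l)))
      = ennreal (expected_arrival_weight l G n s)"
proof -
  define D where "D = density lborel (exponential_density l)"
  interpret D: prob_space D
    unfolding D_def using l by (rule prob_space_exponential_density)
  interpret product_sigma_finite "\<lambda>_::nat. D"
    by (simp add: product_sigma_finite_def D.sigma_finite_measure)
  have sets_D[measurable_cong]: "sets D = sets borel"
    by (simp add: D_def)
  have "(\<integral>\<^sup>+x. arrival_weight g n s (\<lambda>j. x (m + j)) \<partial>PiM {m..m + n} (\<lambda>_. D))
      = ennreal (expected_arrival_weight l G n s)" if "0 \<le> s" "s \<le> 1" for s m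
    using that
  proof (induction n arbitrary: s m)
    case 0
    have "(\<integral>\<^sup>+x. arrival_weight g 0 s (\<lambda>j. x (m + j)) \<partial>PiM {m..m + 0} (\<lambda>_. D))
        = (\<integral>\<^sup>+x. indicator {1 - s<..} (x m) \<partial>PiM {m} (\<lambda>_. D))"
      unfolding add_0_right atLeastAtMost_singleton
      by (intro nn_integral_cong) (auto simp: arrival_weight_def indicator_def)
    also have "\<dots> = emeasure D {1 - s<..}"
      by (subst product_nn_integral_singleton) auto
    also have "\<dots> = ennreal (expected_arrival_weight l G 0 s)"
      using 0 l by (simp add: D_def emeasure_exponential_density_greaterThan expected_arrival_weight_def
          algebra_simps)
    finally show ?case .
  next
    case (Suc n)
    have IH: "(\<integral>\<^sup>+x. arrival_weight g n (s + y) (\<lambda>j. x (Suc m + j)) \<partial>PiM {Suc m..Suc m + n} (\<lambda>_. D))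
        = ennreal (expected_arrival_weight l G n (s + y))" if "0 \<le> y" "s + y \<le> 1" for y
      by (rule Suc.IH) (use Suc.prems that in auto)
    have "AE y in D. 0 \<le> y"
      unfolding D_def by (subst AE_density) (auto simp: exponential_density_def)
    then have "AE y in D. (if s + y \<le> 1 then ennreal (g (s + y)) else 0)
          * (\<integral>\<^sup>+x. arrival_weight g n (s + y) (\<lambda>j. x (Suc m + j)) \<partial>PiM {Suc m..Suc m + n} (\<lambda>_. D))
        = indicator {0..1 - s} y * ennreal (g (s + y) * expected_arrival_weight l G n (s + y))"
      by eventually_elim (simp add: IH[simplified] ennreal_mult' g_nonneg indicator_def)
    then have "(\<integral>\<^sup>+x. arrival_weight g (Suc n) s (\<lambda>j. x (m + j)) \<partial>PiM {m..m + Suc n} (\<lambda>_. D))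
        = (\<integral>\<^sup>+y. indicator {0..1 - s} y * ennreal (g (s + y) * expected_arrival_weight l G n (s + y)) \<partial>D)"
      by (simp add: nn_integral_arrival_weight_Suc[OF D.sigma_finite_measure sets_D g]
          cong: nn_integral_cong_AE)
    also have "\<dots> = ennreal (expected_arrival_weight l G (Suc n) s)"
      unfolding D_def by (rule nn_integral_exponential_step[OF l Suc.prems g g_nonneg G_cont G_deriv])
    finally show ?case .
  qed
  then show ?thesis
    using s by (simp add: D_def)
qed

lemma (in prob_space) nn_integral_indep_identically_distributed:
  assumes "I \<noteq> {}" and indep: "indep_vars (\<lambda>_. borel) X I"
    and rv: "\<And>i. i \<in> I \<Longrightarrow> random_variable borel (X i)"
    and law: "\<And>i. i \<in> I \<Longrightarrow> distr M borel (X i) = D"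
    and F[measurable]: "F \<in> borel_measurable (PiM I (\<lambda>_. borel))"
  shows "(\<integral>\<^sup>+\<omega>. F (\<lambda>i\<in>I. X i \<omega>) \<partial>M) = (\<integral>\<^sup>+x. F x \<partial>PiM I (\<lambda>_. D))"
proof -
  have "distr M (PiM I (\<lambda>_. borel)) (\<lambda>\<omega>. \<lambda>i\<in>I. X i \<omega>) = PiM I (\<lambda>i. distr M borel (X i))"
    using indep_vars_iff_distr_eq_PiM'[where M'="\<lambda>_. borel", OF \<open>I \<noteq> {}\<close> rv] indep by simp
  also have "\<dots> = PiM I (\<lambda>_. D)"
    by (rule PiM_cong) (simp_all add: law)
  finally have law_eq: "distr M (PiM I (\<lambda>_. borel)) (\<lambda>\<omega>. \<lambda>i\<in>I. X i \<omega>) = PiM I (\<lambda>_. D)" .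
  have "(\<lambda>\<omega>. \<lambda>i\<in>I. X i \<omega>) \<in> measurable M (PiM I (\<lambda>_. borel))"
    by (intro measurable_restrict rv)
  then have "(\<integral>\<^sup>+\<omega>. F (\<lambda>i\<in>I. X i \<omega>) \<partial>M)
      = (\<integral>\<^sup>+x. F x \<partial>distr M (PiM I (\<lambda>_. borel)) (\<lambda>\<omega>. \<lambda>i\<in>I. X i \<omega>))"
    by (rule nn_integral_distr[symmetric]) simp
  then show ?thesis
    by (simp only: law_eq)
qed

locale exponential_interarrivals = prob_space +
  fixes l :: real and E :: "nat \<Rightarrow> 'a \<Rightarrow> real"
  assumes rate_pos: "0 < l"
    and indep: "indep_vars (\<lambda>_. borel) E UNIV"
    and exponential: "\<And>i. distributed M lborel (E i) (exponential_density l)"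
begin

lemma measurable_interarrival[measurable]: "E i \<in> borel_measurable M"
  using distributed_measurable[OF exponential[of i]] by simp

lemma distr_interarrival: "distr M borel (E i) = density lborel (exponential_density l)"
proof -
  have "distr M borel (E i) = distr M lborel (E i)"
    by (rule distr_cong) auto
  also have "\<dots> = density lborel (exponential_density l)"
    by (rule distributed_distr_eq_density[OF exponential])
  finally show ?thesis .
qed

lemma AE_interarrivals_nonneg: "AE \<omega> in M. \<forall>j. 0 \<le> E j \<omega>"
proof (subst AE_all_countable, intro allI)
  fix j
  have "prob {\<omega> \<in> space M. 0 < E j \<omega>} = 1"
    using exponential_distributedD_gt[OF exponential[of j] _ rate_pos, of 0] by simp
  then have "AE \<omega> in M. \<omega> \<in> {\<omega> \<in> space M. 0 < E j \<omega>}"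
    by (subst AE_in_set_eq_1) auto
  then show "AE \<omega> in M. 0 \<le> E j \<omega>"
    by eventually_elim simp
qed

lemma nn_integral_suminf_arrival_weight:
  fixes G g :: "real \<Rightarrow> real"
  assumes g[measurable]: "g \<in> borel_measurable borel" and g_nonneg: "\<And>u. 0 \<le> g u"
    and G_cont: "continuous_on {0..1} G"
    and G_deriv: "\<And>u. 0 < u \<Longrightarrow> u < 1 \<Longrightarrow> (G has_real_derivative g u) (at u)"
  shows "(\<integral>\<^sup>+\<omega>. (\<Sum>n. arrival_weight g n 0 (\<lambda>j. E j \<omega>)) \<partial>M) = ennreal (exp (l * (G 1 - G 0) - l))"
proof -
  have coordinate: "(\<lambda>x. x j) \<in> borel_measurable (PiM {0..n} (\<lambda>_. borel))" if "j \<le> n" for j n :: nat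
    using that by (intro measurable_component_singleton) auto
  have "(\<integral>\<^sup>+\<omega>. arrival_weight g n 0 (\<lambda>j. E j \<omega>) \<partial>M)
      = (\<integral>\<^sup>+\<omega>. arrival_weight g n 0 (\<lambda>i\<in>{0..n}. E i \<omega>) \<partial>M)" for n
    by (intro nn_integral_cong arrival_weight_cong) auto
  also have "\<dots> n = (\<integral>\<^sup>+x. arrival_weight g n 0 (\<lambda>j. x (0 + j))
      \<partial>PiM {0..0 + n} (\<lambda>_. density lborel (exponential_density l)))" for n
    by (simp, intro nn_integral_indep_identically_distributed indep_vars_subset[OF indep]
        borel_measurable_arrival_weight coordinate distr_interarrival) auto
  also have "\<dots> n = ennreal (exp (- l) * (l * (G 1 - G 0)) ^ n / fact n)" for n
    by (subst nn_integral_arrival_weight_PiM[OF rate_pos g g_nonneg G_cont G_deriv])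
      (simp_all add: expected_arrival_weight_def)
  finally have "(\<integral>\<^sup>+\<omega>. (\<Sum>n. arrival_weight g n 0 (\<lambda>j. E j \<omega>)) \<partial>M)
      = (\<Sum>n. ennreal (exp (- l) * (l * (G 1 - G 0)) ^ n / fact n))"
    by (subst nn_integral_suminf) (auto intro!: borel_measurable_arrival_weight)
  also have "\<dots> = ennreal (exp (l * (G 1 - G 0) - l))"
    using rate_pos antiderivative_le_at_1[OF g_nonneg G_cont G_deriv, of 0]
    by (subst suminf_ennreal_exp_series) (simp_all add: mult_exp_exp algebra_simps)
  finally show ?thesis .
qed

lemma AE_partial_sums_exceed_1: "AE \<omega> in M. \<exists>n. 1 < (\<Sum>j\<le>n. E j \<omega>)"
proof -
  define A where "A = {\<omega> \<in> space M. \<exists>n. 1 < (\<Sum>j\<le>n. E j \<omega>)}"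
  have "AE \<omega> in M. (\<Sum>n. arrival_weight (\<lambda>_. 1) n 0 (\<lambda>j. E j \<omega>)) = indicator A \<omega>"
    using AE_space AE_interarrivals_nonneg
    by eventually_elim
      (auto simp: A_def indicator_def suminf_arrival_weight suminf_arrival_weight_bounded not_less)
  then have "emeasure M A = (\<integral>\<^sup>+\<omega>. (\<Sum>n. arrival_weight (\<lambda>_. 1) n 0 (\<lambda>j. E j \<omega>)) \<partial>M)"
    by (simp add: nn_integral_cong_AE A_def)
  also have "\<dots> = 1"
    by (subst nn_integral_suminf_arrival_weight[where G="\<lambda>u. u"])
      (auto intro!: derivative_eq_intros continuous_intros)
  finally have "AE \<omega> in M. \<omega> \<in> A"
    by (subst AE_in_set_eq_1) (auto simp: A_def emeasure_eq_measure)
  then show ?thesis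
    by eventually_elim (simp add: A_def)
qed

lemma AE_prod_min_partial_sums_nonneg: "AE \<omega> in M. 0 \<le> prod_min_partial_sums E \<omega>"
  using AE_interarrivals_nonneg AE_partial_sums_exceed_1
  by eventually_elim (simp add: prod_min_partial_sums_nonneg)

lemma nn_integral_prod_min_partial_sums_powr:
  assumes "-1 < \<beta>"
  shows "(\<integral>\<^sup>+\<omega>. ennreal (prod_min_partial_sums E \<omega> powr \<beta>) \<partial>M) = ennreal (exp (- (\<beta> * l) / (1 + \<beta>)))"
proof -
  define G where "G u = u powr (1 + \<beta>) / (1 + \<beta>)" for u :: real
  have G_deriv: "(G has_real_derivative u powr \<beta>) (at u)" if "0 < u" for u
  proof -
    have "(G has_real_derivative (1 + \<beta>) * u powr (1 + \<beta> - 1) / (1 + \<beta>)) (at u)"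
      unfolding G_def using that by (intro DERIV_cdivide has_real_derivative_powr) auto
    then show ?thesis
      using assms by simp
  qed
  have G_cont: "continuous_on {0..1} G"
    unfolding G_def using assms by (intro continuous_intros continuous_on_powr') auto
  have "(\<integral>\<^sup>+\<omega>. ennreal (prod_min_partial_sums E \<omega> powr \<beta>) \<partial>M)
      = (\<integral>\<^sup>+\<omega>. (\<Sum>n. arrival_weight (\<lambda>u. u powr \<beta>) n 0 (\<lambda>j. E j \<omega>)) \<partial>M)"
    using AE_interarrivals_nonneg AE_partial_sums_exceed_1
    by (intro nn_integral_cong_AE, eventually_elim) (simp add: suminf_arrival_weight_powr)
  also have "\<dots> = ennreal (exp (l * (G 1 - G 0) - l))"
    by (rule nn_integral_suminf_arrival_weight[OF _ _ G_cont G_deriv]) auto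
  also have "l * (G 1 - G 0) - l = - (\<beta> * l) / (1 + \<beta>)"
    using assms by (simp add: G_def field_simps)
  finally show ?thesis .
qed

lemma measurable_prod_min_partial_sums[measurable]: "prod_min_partial_sums E \<in> borel_measurable M"
  unfolding prod_min_partial_sums_def[abs_def] by measurable

lemma integrable_prod_min_partial_sums_powr:
  assumes "-1 < \<beta>"
  shows "integrable M (\<lambda>\<omega>. prod_min_partial_sums E \<omega> powr \<beta>)"
  using nn_integral_prod_min_partial_sums_powr[OF assms] by (intro integrableI_nonneg) auto

lemma expectation_prod_min_partial_sums_powr:
  assumes "-1 < \<beta>"
  shows "expectation (\<lambda>\<omega>. prod_min_partial_sums E \<omega> powr \<beta>) = exp (- (\<beta> * l) / (1 + \<beta>))"
  using nn_integral_prod_min_partial_sums_powr[OF assms] by (simp add: integral_eq_nn_integral)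

text \<open>The case k = 0 is excluded only because 0 powr 0 = 0.\<close>

lemma
  fixes k :: nat
  assumes "k \<noteq> 0"
  shows integrable_prod_min_partial_sums_power: "integrable M (\<lambda>\<omega>. prod_min_partial_sums E \<omega> ^ k)"
    and expectation_prod_min_partial_sums_power:
      "expectation (\<lambda>\<omega>. prod_min_partial_sums E \<omega> ^ k) = exp (- (real k * l) / (1 + real k))"
proof -
  have powr_eq: "AE \<omega> in M. prod_min_partial_sums E \<omega> powr k = prod_min_partial_sums E \<omega> ^ k"
    using AE_prod_min_partial_sums_nonneg by eventually_elim (simp add: powr_realpow' assms)
  show "integrable M (\<lambda>\<omega>. prod_min_partial_sums E \<omega> ^ k)"
    using integrable_prod_min_partial_sums_powr[of k] integrable_cong_AE[OF _ _ powr_eq] by simp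
  show "expectation (\<lambda>\<omega>. prod_min_partial_sums E \<omega> ^ k) = exp (- (real k * l) / (1 + real k))"
    using expectation_prod_min_partial_sums_powr[of k] integral_cong_AE[OF _ _ powr_eq] by simp
qed

end

theorem corollary1:
  fixes M :: "'a measure" and E :: "nat \<Rightarrow> 'a \<Rightarrow> real" and l :: real
  assumes "prob_space M"
    and "l > 0"
    and "prob_space.indep_vars M (\<lambda>_. borel) E UNIV"
    and "\<And>i. distributed M lborel (E i) (exponential_density l)"
  defines "X \<equiv> prod_min_partial_sums E"
  shows "(\<forall>\<beta>::real. \<beta> > -1 \<longrightarrow>
            prob_space.expectation M (\<lambda>\<omega>. X \<omega> powr \<beta>) = exp (- (\<beta> * l) / (1 + \<beta>)))
       \<and> prob_space.expectation M X = exp (- l / 2)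
       \<and> prob_space.variance M X = exp (- 2 * l / 3) - exp (- l)"
proof -
  interpret exponential_interarrivals M l E
    using assms(1-4) by (simp add: exponential_interarrivals_def exponential_interarrivals_axioms_def)
  have mean: "expectation X = exp (- l / 2)"
    using expectation_prod_min_partial_sums_power[of 1] by (simp add: X_def)
  have "variance X = expectation (\<lambda>\<omega>. (X \<omega>)\<^sup>2) - (expectation X)\<^sup>2"
    using integrable_prod_min_partial_sums_power[of 1] integrable_prod_min_partial_sums_power[of 2]
    by (intro variance_eq) (simp_all add: X_def)
  also have "\<dots> = exp (- 2 * l / 3) - exp (- l)"
    using expectation_prod_min_partial_sums_power[of 2] unfolding mean
    by (simp add: X_def power2_eq_square mult_exp_exp)
  finally show ?thesis
    using expectation_prod_min_partial_sums_powr mean by (simp add: X_def)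
qed

end
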